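(* Let $\mathcal{P}=(\mathcal{V},\mathcal{L},\ell_0,\mathcal{T})$ be an integer program and $t_L=(\ell,\varphi,\eta,\ell)\in\mathcal{T}\setminus\mathcal{T}_0$. Let $\mathcal{SB}_L$ be a size bound for a loop $L$ which corresponds to $t_L$ via a variable renaming $\pi$. Then $\pi\circ\mathcal{SB}_L\circ\pi^{-1}$ (i.e., $x\mapsto\pi(\mathcal{SB}_L(\pi^{-1}(x)))$, where $\pi$ applied to a bound renames its variables, and with the value $x$ for variables $x\in\mathcal{V}\setminus\mathcal{V}'$) is a local size bound for $t_L$ w.r.t. $\{t_L\}$.
   Context: Integer program: tuple $(\mathcal{V},\mathcal{L},\ell_0,\mathcal{T})$ with finite variables $\mathcal{V}$, finite locations $\mathcal{L}$, initial location $\ell_0$, finite set $\mathcal{T}$ of transitions $(\ell,\varphi,\eta,\ell')$ with $\ell'\ne\ell_0$, guard $\varphi$ a formula built from inequations $p>0$ ($p\in\mathbb{Q}[\mathcal{V}]$) with $\wedge,\vee$, update $\eta:\mathcal{V}\to\mathbb{Z}[\mathcal{V}]$; $\mathcal{T}_0$ = transitions starting in $\ell_0$. States $\sigma:\mathcal{V}\to\mathbb{Z}$, $|\sigma|(x)=|\sigma(x)|$. $(\ell,\sigma)\to_t(\ell',\sigma')$ for $t=(\ell,\varphi,\eta,\ell')$ if $\sigma(\varphi)$ holds and $\sigma'(v)=\sigma(\eta(v))$ for all $v$; $\to_{\mathcal{T}'}=\bigcup_{t\in\mathcal{T}'}\to_t$, $^*$ reflexive-transitive closure. Entry transitions $\mathcal{E}_{\mathcal{T}'}=\{t=(\_,\_,\_,\ell)\in\mathcal{T}\setminus\mathcal{T}'\mid\exists(\ell,\_,\_,\_)\in\mathcal{T}'\}$.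 Bounds $\mathcal{B}$: smallest set containing $\mathbb{N}\cup\{\omega\}$ and the variables, closed under $+$, $\cdot$, $k^{(\cdot)}$ ($k\in\mathbb{N}$). Local size bound for $t'\in\mathcal{T}'$ w.r.t. $\mathcal{T}'$: $\mathcal{SB}_{t'}:\mathcal{V}\to\mathcal{B}$ with $|\sigma|(\mathcal{SB}_{t'}(x))\ge\sup\{|\sigma'(x)|\mid\exists\ell',(\_,\_,\_,\ell)\in\mathcal{E}_{\mathcal{T}'}.\ (\ell,\sigma)(\to^*_{\mathcal{T}'}\circ\to_{t'})(\ell',\sigma')\}$ for all $x,\sigma$. Loop $L=(\varphi',\eta')$ over $\{x_1,\dots,x_d\}$: guard $\varphi'$ and update $\eta':\{x_1,\dots,x_d\}\to\mathbb{Z}[x_1,\dots,x_d]$; runtime complexity $\mathrm{rc}(\sigma)=\inf\{n\mid\sigma(\eta'^n(\neg\varphi'))\}$ ($\inf\emptyset=\omega$), where $\eta'^n$ is $n$-fold application (substitution); a size bound for $L$ is $\mathcal{SB}_L:\{x_1,\dots,x_d\}\to\mathcal{B}$ with $|\sigma|(\mathcal{SB}_L(x))\ge\sup\{|\sigma(\eta'^n(x))|\mid n\le\mathrm{rc}(\sigma)\}$ for all $x$ and integer states $\sigma$. Correspondence: let $t=(\ell,\varphi,\eta,\ell)$ with $\varphi\in\mathcal{F}(\mathcal{V}')$ for some $\mathcal{V}'\subseteq\mathcal{V}$, $\eta(x)=x$ for $x\in\mathcal{V}\setminus\mathcal{V}'$ and $\eta(x)\in\mathbb{Z}[\mathcal{V}']$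 for $x\in\mathcal{V}'$. A loop $(\varphi',\eta')$ over $\{x_1,\dots,x_d\}$ corresponds to $t$ via the variable renaming (bijection) $\pi:\{x_1,\dots,x_d\}\to\mathcal{V}'$ if $\varphi$ is $\pi(\varphi')$ and $\eta(\pi(x_i))=\pi(\eta'(x_i))$ for all $i$. *)

theory Defs
  imports Main "HOL-Library.Extended_Nat"
begin

datatype ('v, 'c) pexp =
    PVar 'v
  | PConst 'c
  | PAdd "('v, 'c) pexp" "('v, 'c) pexp"
  | PMul "('v, 'c) pexp" "('v, 'c) pexp"

primrec peval :: "('v \<Rightarrow> 'c::comm_ring_1) \<Rightarrow> ('v, 'c) pexp \<Rightarrow> 'c" where
  "peval s (PVar v) = s v"
| "peval s (PConst c) = c"
| "peval s (PAdd p q) = peval s p + peval s q"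
| "peval s (PMul p q) = peval s p * peval s q"

primrec pvars :: "('v, 'c) pexp \<Rightarrow> 'v set" where
  "pvars (PVar v) = {v}"
| "pvars (PConst c) = {}"
| "pvars (PAdd p q) = pvars p \<union> pvars q"
| "pvars (PMul p q) = pvars p \<union> pvars q"

primrec psubst :: "('v \<Rightarrow> ('w, 'c) pexp) \<Rightarrow> ('v, 'c) pexp \<Rightarrow> ('w, 'c) pexp" where
  "psubst f (PVar v) = f v"
| "psubst f (PConst c) = PConst c"
| "psubst f (PAdd p q) = PAdd (psubst f p) (psubst f q)"
| "psubst f (PMul p q) = PMul (psubst f p) (psubst f q)"

datatype 'v form =
    Gt "('v, rat) pexp"
  | FAnd "'v form" "'v form"
  | FOr "'v form" "'v form"

primrec fsat :: "('v \<Rightarrow> int) \<Rightarrow> 'v form \<Rightarrow> bool" where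
  "fsat s (Gt p) = (peval (\<lambda>v. of_int (s v)) p > 0)"
| "fsat s (FAnd a b) = (fsat s a \<and> fsat s b)"
| "fsat s (FOr a b) = (fsat s a \<or> fsat s b)"

primrec fvars :: "'v form \<Rightarrow> 'v set" where
  "fvars (Gt p) = pvars p"
| "fvars (FAnd a b) = fvars a \<union> fvars b"
| "fvars (FOr a b) = fvars a \<union> fvars b"

primrec fsubst :: "('v \<Rightarrow> ('v, int) pexp) \<Rightarrow> 'v form \<Rightarrow> 'v form" where
  "fsubst f (Gt p) = Gt (psubst (\<lambda>v. map_pexp id of_int (f v)) p)"
| "fsubst f (FAnd a b) = FAnd (fsubst f a) (fsubst f b)"
| "fsubst f (FOr a b) = FOr (fsubst f a) (fsubst f b)"

abbreviation prename :: "('w \<Rightarrow> 'v) \<Rightarrow> ('w, 'c) pexp \<Rightarrow> ('v, 'c) pexp" where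
  "prename \<pi> p \<equiv> map_pexp \<pi> id p"

primrec frename :: "('w \<Rightarrow> 'v) \<Rightarrow> 'w form \<Rightarrow> 'v form" where
  "frename \<pi> (Gt p) = Gt (prename \<pi> p)"
| "frename \<pi> (FAnd a b) = FAnd (frename \<pi> a) (frename \<pi> b)"
| "frename \<pi> (FOr a b) = FOr (frename \<pi> a) (frename \<pi> b)"

datatype 'v bound =
    BNat nat
  | BOmega
  | BVar 'v
  | BAdd "'v bound" "'v bound"
  | BMul "'v bound" "'v bound"
  | BPow nat "'v bound"

text \<open>Evaluation of a bound in the absolute state |s|, in extended naturals
  (omega = infinity); k^omega = omega for k >= 2, and 1 resp. 0 for k = 1 resp. 0.\<close>
primrec beval :: "('v \<Rightarrow> int) \<Rightarrow> 'v bound \<Rightarrow> enat" where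
  "beval s (BNat n) = enat n"
| "beval s BOmega = \<infinity>"
| "beval s (BVar v) = enat (nat \<bar>s v\<bar>)"
| "beval s (BAdd a b) = beval s a + beval s b"
| "beval s (BMul a b) = beval s a * beval s b"
| "beval s (BPow k b) = (case beval s b of enat m \<Rightarrow> enat (k ^ m)
                          | \<infinity> \<Rightarrow> (if k \<le> 1 then enat k else \<infinity>))"

abbreviation brename :: "('w \<Rightarrow> 'v) \<Rightarrow> 'w bound \<Rightarrow> 'v bound" where
  "brename \<pi> b \<equiv> map_bound \<pi> b"

text \<open>Variables are the (finite) type 'v, locations the (finite) type 'l.
  A transition is (source, guard, update, target).\<close>
type_synonym ('l, 'v) transition = "'l \<times> 'v form \<times> ('v \<Rightarrow> ('v, int) pexp) \<times> 'l"

definition src :: "('l, 'v) transition \<Rightarrow> 'l" where "src t = fst t"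
definition tgt :: "('l, 'v) transition \<Rightarrow> 'l" where "tgt t = snd (snd (snd t))"

definition integer_program :: "'l \<Rightarrow> ('l, 'v) transition set \<Rightarrow> bool" where
  "integer_program l0 T \<longleftrightarrow> finite T \<and> (\<forall>t\<in>T. tgt t \<noteq> l0)"

definition initial_trans :: "'l \<Rightarrow> ('l, 'v) transition set \<Rightarrow> ('l, 'v) transition set" where
  "initial_trans l0 T = {t \<in> T. src t = l0}"

definition step :: "('l, 'v) transition \<Rightarrow> (('l \<times> ('v \<Rightarrow> int)) \<times> ('l \<times> ('v \<Rightarrow> int))) set" where
  "step t = {((l, s), (l', s')). \<exists>\<phi> \<eta>. t = (l, \<phi>, \<eta>, l') \<and> fsat s \<phi> \<and>
                                    (\<forall>v. s' v = peval s (\<eta> v))}"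

definition steps :: "('l, 'v) transition set \<Rightarrow> (('l \<times> ('v \<Rightarrow> int)) \<times> ('l \<times> ('v \<Rightarrow> int))) set" where
  "steps T' = (\<Union>t\<in>T'. step t)"

definition entry_trans :: "('l, 'v) transition set \<Rightarrow> ('l, 'v) transition set \<Rightarrow> ('l, 'v) transition set" where
  "entry_trans T T' = {t \<in> T - T'. \<exists>t'\<in>T'. src t' = tgt t}"

definition local_size_bound ::
  "('l, 'v) transition set \<Rightarrow> ('l, 'v) transition set \<Rightarrow> ('l, 'v) transition \<Rightarrow> ('v \<Rightarrow> 'v bound) \<Rightarrow> bool" where
  "local_size_bound T T' t' SB \<longleftrightarrow> t' \<in> T' \<and>
     (\<forall>x s. beval s (SB x) \<ge>
        Sup {enat (nat \<bar>s' x\<bar>) | s'. \<exists>l l'. (\<exists>t\<in>entry_trans T T'. tgt t = l) \<and>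
               ((l, s), (l', s')) \<in> (steps T')\<^sup>* O step t'})"

text \<open>A loop over the variables of the finite type 'w (i.e. {x_1..x_d} = UNIV).\<close>
type_synonym 'w loop = "'w form \<times> ('w \<Rightarrow> ('w, int) pexp)"

definition rc :: "'w loop \<Rightarrow> ('w \<Rightarrow> int) \<Rightarrow> enat" where
  "rc L s = (INF n \<in> {n. \<not> fsat s ((fsubst (snd L) ^^ n) (fst L))}. enat n)"

definition loop_size_bound :: "'w loop \<Rightarrow> ('w \<Rightarrow> 'w bound) \<Rightarrow> bool" where
  "loop_size_bound L SB \<longleftrightarrow>
     (\<forall>x s. beval s (SB x) \<ge>
        Sup {enat (nat \<bar>peval s ((psubst (snd L) ^^ n) (PVar x))\<bar>) | n. enat n \<le> rc L s})"

definition corresponds ::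
  "'w loop \<Rightarrow> ('l, 'v) transition \<Rightarrow> 'v set \<Rightarrow> ('w \<Rightarrow> 'v) \<Rightarrow> bool" where
  "corresponds L t V' \<pi> \<longleftrightarrow>
     (\<exists>l \<phi> \<eta>. t = (l, \<phi>, \<eta>, l) \<and>
        fvars \<phi> \<subseteq> V' \<and>
        (\<forall>x. x \<notin> V' \<longrightarrow> \<eta> x = PVar x) \<and>
        (\<forall>x\<in>V'. pvars (\<eta> x) \<subseteq> V') \<and>
        bij_betw \<pi> UNIV V' \<and>
        \<phi> = frename \<pi> (fst L) \<and>
        (\<forall>i. \<eta> (\<pi> i) = prename \<pi> (snd L i)))"

definition lift_bound :: "'v set \<Rightarrow> ('w \<Rightarrow> 'v) \<Rightarrow> ('w \<Rightarrow> 'w bound) \<Rightarrow> 'v \<Rightarrow> 'v bound" where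
  "lift_bound V' \<pi> SB x = (if x \<in> V' then brename \<pi> (SB (the_inv_into UNIV \<pi> x)) else BVar x)"

end

theory Submission
  imports Defs
begin

text \<open>Along a run through the self-loop \<open>t\<^sub>L\<close>, the state restricted to \<open>V'\<close> and read
  through \<open>\<pi>\<close> evolves exactly like the loop \<open>L\<close>, while the variables outside \<open>V'\<close> never
  change. Every transition taken witnesses that the loop guard held, so a run of \<open>n + 1\<close>
  steps corresponds to \<open>n + 1 \<le> rc\<close> loop iterations, and the size bound of \<open>L\<close> applies.\<close>

definition update_state :: "('v \<Rightarrow> ('w, 'c::comm_ring_1) pexp) \<Rightarrow> ('w \<Rightarrow> 'c) \<Rightarrow> 'v \<Rightarrow> 'c" where
  "update_state \<eta> s = (\<lambda>v. peval s (\<eta> v))"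

lemma peval_prename: "peval s (prename \<pi> p) = peval (s \<circ> \<pi>) p"
  by (induction p) auto

lemma fsat_frename: "fsat s (frename \<pi> \<phi>) = fsat (s \<circ> \<pi>) \<phi>"
  by (induction \<phi>) (auto simp: peval_prename comp_def)

lemma peval_psubst: "peval s (psubst \<eta> p) = peval (update_state \<eta> s) p"
  by (induction p) (auto simp: update_state_def)

lemma peval_map_of_int:
  "peval (\<lambda>v. of_int (s v)) (map_pexp id of_int p) = (of_int (peval s p) :: 'c::comm_ring_1)"
  by (induction p) auto

lemma fsat_fsubst: "fsat s (fsubst \<eta> \<phi>) = fsat (update_state \<eta> s) \<phi>"
  by (induction \<phi>) (auto simp: peval_psubst peval_map_of_int update_state_def)

lemma fsat_fsubst_funpow: "fsat s ((fsubst \<eta> ^^ n) \<phi>) = fsat ((update_state \<eta> ^^ n) s) \<phi>"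
  by (induction n arbitrary: s) (simp_all add: fsat_fsubst funpow_swap1[symmetric])

lemma peval_psubst_funpow:
  fixes \<eta> :: "'v \<Rightarrow> ('v, 'c::comm_ring_1) pexp"
  shows "peval s ((psubst \<eta> ^^ n) p) = peval ((update_state \<eta> ^^ n) s) p"
  by (induction n arbitrary: s) (simp_all add: peval_psubst funpow_swap1[symmetric])

lemma beval_brename: "beval s (brename \<pi> b) = beval (s \<circ> \<pi>) b"
  by (induction b) auto

lemma update_state_funpow_rename:
  assumes "\<forall>i. \<eta> (\<pi> i) = prename \<pi> (\<eta>' i)"
  shows "(update_state \<eta> ^^ n) s \<circ> \<pi> = (update_state \<eta>' ^^ n) (s \<circ> \<pi>)"
proof (induction n)
  case (Suc n)
  have "update_state \<eta> s' \<circ> \<pi> = update_state \<eta>' (s' \<circ> \<pi>)" for s'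
    by (rule ext) (simp add: update_state_def assms peval_prename)
  then show ?case by (simp add: Suc)
qed simp

lemma update_state_funpow_fixed:
  assumes "\<eta> x = PVar x"
  shows "(update_state \<eta> ^^ n) s x = s x"
  by (induction n) (simp_all add: update_state_def assms)

lemma rtrancl_step_self_loop:
  assumes "((l1, s), (l2, s')) \<in> (step (l, \<phi>, \<eta>, l))\<^sup>*"
  shows "\<exists>n. s' = (update_state \<eta> ^^ n) s \<and> (\<forall>k<n. fsat ((update_state \<eta> ^^ k) s) \<phi>)"
  using assms
proof (induction "(l2, s')" arbitrary: l2 s' rule: rtrancl_induct)
  case base
  show ?case by (intro exI[of _ 0]) simp
next
  case (step c)
  obtain l3 s'' where c: "c = (l3, s'')" by (cases c)
  with step.hyps(3) obtain n where
    n: "s'' = (update_state \<eta> ^^ n) s" "\<forall>k<n. fsat ((update_state \<eta> ^^ k) s) \<phi>"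
    by blast
  from step.hyps(2) c have "fsat s'' \<phi>" and "s' = update_state \<eta> s''"
    by (auto simp: step_def update_state_def)
  with n show ?case
    by (intro exI[of _ "Suc n"]) (auto simp: less_Suc_eq)
qed

lemma run_step_self_loop:
  assumes "((l1, s), (l2, s')) \<in> (step (l, \<phi>, \<eta>, l))\<^sup>* O step (l, \<phi>, \<eta>, l)"
  obtains n where "s' = (update_state \<eta> ^^ Suc n) s"
    and "\<forall>k\<le>n. fsat ((update_state \<eta> ^^ k) s) \<phi>"
proof -
  from assms obtain l3 s'' where run: "((l1, s), (l3, s'')) \<in> (step (l, \<phi>, \<eta>, l))\<^sup>*"
    and last: "((l3, s''), (l2, s')) \<in> step (l, \<phi>, \<eta>, l)"
    by auto
  from rtrancl_step_self_loop[OF run] obtain n where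
    n: "s'' = (update_state \<eta> ^^ n) s" "\<forall>k<n. fsat ((update_state \<eta> ^^ k) s) \<phi>"
    by blast
  from last have "fsat s'' \<phi>" and "s' = update_state \<eta> s''"
    by (auto simp: step_def update_state_def)
  with n show thesis
    by (intro that[of n]) (auto simp: nat_less_le)
qed

lemma enat_le_rc:
  assumes "\<forall>k<n. fsat ((update_state (snd L) ^^ k) s) (fst L)"
  shows "enat n \<le> rc L s"
  unfolding rc_def
proof (rule INF_greatest)
  fix m
  assume "m \<in> {m. \<not> fsat s ((fsubst (snd L) ^^ m) (fst L))}"
  with assms show "enat n \<le> enat m"
    by (auto simp: fsat_fsubst_funpow not_less[symmetric])
qed

lemma loop_size_bound_le:
  assumes "loop_size_bound L SB" and "enat n \<le> rc L s"
  shows "enat (nat \<bar>peval s ((psubst (snd L) ^^ n) (PVar x))\<bar>) \<le> beval s (SB x)"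
proof -
  have "enat (nat \<bar>peval s ((psubst (snd L) ^^ n) (PVar x))\<bar>)
        \<le> Sup {enat (nat \<bar>peval s ((psubst (snd L) ^^ m) (PVar x))\<bar>) | m. enat m \<le> rc L s}"
    using assms(2) by (intro Sup_upper) blast
  also have "\<dots> \<le> beval s (SB x)"
    using assms(1) by (simp add: loop_size_bound_def)
  finally show ?thesis .
qed

lemma lift_bound_bounds_runs:
  assumes "corresponds L t V' \<pi>" and "loop_size_bound L SB"
    and "((l1, s), (l2, s')) \<in> (step t)\<^sup>* O step t"
  shows "enat (nat \<bar>s' x\<bar>) \<le> beval s (lift_bound V' \<pi> SB x)"
proof -
  obtain l \<phi> \<eta> where t: "t = (l, \<phi>, \<eta>, l)" and outside: "\<forall>x. x \<notin> V' \<longrightarrow> \<eta> x = PVar x"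
    and bij: "bij_betw \<pi> UNIV V'" and guard: "\<phi> = frename \<pi> (fst L)"
    and update: "\<forall>i. \<eta> (\<pi> i) = prename \<pi> (snd L i)"
    using assms(1) unfolding corresponds_def by blast
  obtain n where s': "s' = (update_state \<eta> ^^ Suc n) s"
    and guards: "\<forall>k\<le>n. fsat ((update_state \<eta> ^^ k) s) \<phi>"
    using assms(3) unfolding t by (rule run_step_self_loop)
  show ?thesis
  proof (cases "x \<in> V'")
    case False
    with outside have "s' x = s x"
      unfolding s' by (intro update_state_funpow_fixed) simp
    with False show ?thesis
      by (simp add: lift_bound_def)
  next
    case True
    with bij obtain i where x: "x = \<pi> i" and inv: "the_inv_into UNIV \<pi> x = i"
      by (metis bij_betw_imp_inj_on bij_betw_imp_surj_on imageE the_inv_into_f_f UNIV_I)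
    have rename: "(update_state \<eta> ^^ k) s \<circ> \<pi> = (update_state (snd L) ^^ k) (s \<circ> \<pi>)" for k
      using update by (rule update_state_funpow_rename)
    have rc: "enat (Suc n) \<le> rc L (s \<circ> \<pi>)"
      using guards by (intro enat_le_rc) (simp add: guard fsat_frename rename less_Suc_eq_le)
    have "s' x = peval (s \<circ> \<pi>) ((psubst (snd L) ^^ Suc n) (PVar i))"
      by (simp only: peval_psubst_funpow peval.simps rename[symmetric] s' x o_apply)
    then have "enat (nat \<bar>s' x\<bar>) \<le> beval (s \<circ> \<pi>) (SB i)"
      using loop_size_bound_le[OF assms(2) rc] by simp
    with True inv show ?thesis
      by (simp add: lift_bound_def beval_brename)
  qed
qed

text \<open>The bound holds from every start state.\<close>

theorem lemma35:
  fixes l0 :: "'l::finite"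
    and T :: "('l, 'v::finite) transition set"
    and tL :: "('l, 'v) transition"
    and L :: "'w::finite loop"
    and SBL :: "'w \<Rightarrow> 'w bound"
    and V' :: "'v set"
    and \<pi> :: "'w \<Rightarrow> 'v"
  assumes "integer_program l0 T"
    and "tL \<in> T - initial_trans l0 T"
    and "corresponds L tL V' \<pi>"
    and "loop_size_bound L SBL"
  shows "local_size_bound T {tL} tL (lift_bound V' \<pi> SBL)"
proof -
  have "steps {tL} = step tL"
    by (simp add: steps_def)
  then show ?thesis
    unfolding local_size_bound_def
    by (auto intro!: Sup_least) (blast intro: lift_bound_bounds_runs[OF assms(3,4)])
qed

end
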